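(* Let $\varphi\colon[\mathbb{F}_2,\mathbb{F}_2]\to\mathbb{Z}$ be the homomorphism defined below. If $g\in[\mathbb{F}_2,\mathbb{F}_2]$ is a product of two squares in $\mathbb{F}_2$ (i.e. $g=a^2b^2$ with $a,b\in\mathbb{F}_2$), then $\varphi(g)$ is even.
   Context: $\mathbb{F}_2$ is the free group on $x,y$. Let $\tilde K$ be the graph with vertex set $\mathbb{Z}^2$ and oriented edges $x^iy^jX$ from $(i,j)$ to $(i+1,j)$ and $x^iy^jY$ from $(i,j)$ to $(i,j+1)$ (the universal abelian cover of the wedge of two circles). A $1$-chain is written $\alpha=P_\alpha(x,y)X+Q_\alpha(x,y)Y$ with $P_\alpha,Q_\alpha$ integer Laurent polynomials (the coefficient of $x^iy^j$ in $P_\alpha$ is the coefficient of the edge $x^iy^jX$, similarly for $Q_\alpha$). For $g\in[\mathbb{F}_2,\mathbb{F}_2]$ written as a word in $x^{\pm1},y^{\pm1}$, the associated cycle $\alpha_g$ is the $1$-cycle traced by the lattice path starting at $(0,0)$ in which a letter $x$ (resp. $x^{-1}$, $y$, $y^{-1}$) moves by $(1,0)$ (resp. $(-1,0)$, $(0,1)$, $(0,-1)$) along the corresponding edge, each edge counted with sign $+1$ if traversed in its orientation and $-1$ otherwise; its homology class depends only on $g$. Let $f_\alpha(y)=P_\alpha(1,y)$. Define $\varphi(g)=f_{\alpha_g}'(1)$; this is a homomorphism $[\mathbb{F}_2,\mathbb{F}_2]\to\mathbb{Z}$. *)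

theory Defs
  imports "HOL-Analysis.Analysis"
begin

text \<open>Letters of the free group F_2 on x, y: x, x^-1, y, y^-1.
  Elements of F_2 are represented by (not necessarily reduced) words;
  multiplication is concatenation.\<close>

datatype letter = Lx | Lxi | Ly | Lyi

type_synonym word = "letter list"

text \<open>Abelianization F_2 -> Z^2 (exponent sums). In the free group F_2,
  the commutator subgroup is exactly the kernel of the abelianization map.\<close>

fun expx :: "letter \<Rightarrow> int" where
  "expx Lx = 1" | "expx Lxi = -1" | "expx Ly = 0" | "expx Lyi = 0"

fun expy :: "letter \<Rightarrow> int" where
  "expy Lx = 0" | "expy Lxi = 0" | "expy Ly = 1" | "expy Lyi = -1"

definition in_commutator :: "word \<Rightarrow> bool" where
  "in_commutator w \<longleftrightarrow> sum_list (map expx w) = 0 \<and> sum_list (map expy w) = 0"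

text \<open>Edges traversed by the lattice path of a word starting at a point:
  (is an X-edge, base point of the edge, sign of traversal).\<close>

fun edges :: "int \<times> int \<Rightarrow> word \<Rightarrow> (bool \<times> (int \<times> int) \<times> int) list" where
  "edges p [] = []"
| "edges (i,j) (Lx # w) = (True, (i,j), 1) # edges (i+1, j) w"
| "edges (i,j) (Lxi # w) = (True, (i-1,j), -1) # edges (i-1, j) w"
| "edges (i,j) (Ly # w) = (False, (i,j), 1) # edges (i, j+1) w"
| "edges (i,j) (Lyi # w) = (False, (i,j-1), -1) # edges (i, j-1) w"

text \<open>Coefficient of the edge x^i y^j X in the cycle alpha_g (i.e. coefficient of x^i y^j in P_alpha).\<close>

definition coeffP :: "word \<Rightarrow> int \<times> int \<Rightarrow> int" where
  "coeffP w q = sum_list [s. (b, q', s) \<leftarrow> edges (0,0) w, b \<and> q' = q]"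

definition coeffQ :: "word \<Rightarrow> int \<times> int \<Rightarrow> int" where
  "coeffQ w q = sum_list [s. (b, q', s) \<leftarrow> edges (0,0) w, \<not> b \<and> q' = q]"

text \<open>Base points of X-edges occurring in the path: a finite set containing the support of P_alpha.\<close>

definition Xpts :: "word \<Rightarrow> (int \<times> int) set" where
  "Xpts w = {q. \<exists>s. (True, q, s) \<in> set (edges (0,0) w)}"

definition P_eval :: "word \<Rightarrow> real \<Rightarrow> real \<Rightarrow> real" where
  "P_eval w x y = (\<Sum>q\<in>Xpts w. of_int (coeffP w q) * x powi fst q * y powi snd q)"

definition f_alpha :: "word \<Rightarrow> real \<Rightarrow> real" where
  "f_alpha w y = P_eval w 1 y"

definition phi :: "word \<Rightarrow> real" where
  "phi w = deriv (f_alpha w) 1"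

end

(*
  Since the derivative of y^j at y = 1 is j, phi g is the height moment M(g): the sum of
  s * j over the X-edges (i, j) traversed with sign s by the path of g. Translating a path
  by (i, j) adds j times its x-exponent to its moment, hence
  M(u v) = M(u) + M(v) + e_y(u) e_x(v). Therefore
  M(a a b b) = 2 M(a) + 2 M(b) + e_y(a) e_x(a) + e_y(b) e_x(b) + 4 e_y(a) e_x(b),
  and for a a b b in the commutator subgroup e(b) = -e(a), so the two odd-looking terms
  coincide.
*)

theory Submission
  imports Defs
begin

lemma sum_list_regroup:
  fixes g :: "'a \<Rightarrow> 'b::comm_semiring_0"
  assumes "finite S" "\<And>x. x \<in> set xs \<Longrightarrow> key x \<in> S"
  shows "(\<Sum>q\<in>S. (\<Sum>x\<leftarrow>xs. if key x = q then g x else 0) * f q) =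
    (\<Sum>x\<leftarrow>xs. g x * f (key x))"
  using assms(2)
proof (induction xs)
  case Nil
  then show ?case by simp
next
  case (Cons x xs)
  have "(\<Sum>q\<in>S. (if key x = q then g x else 0) * f q) =
      (\<Sum>q\<in>S. if key x = q then g x * f q else 0)"
    by (intro sum.cong) auto
  also have "\<dots> = g x * f (key x)"
    using assms(1) Cons.prems by simp
  finally show ?case
    using Cons by (simp add: distrib_right sum.distrib)
qed

definition x_exponent :: "word \<Rightarrow> int" where
  "x_exponent w = (\<Sum>l\<leftarrow>w. expx l)"

definition y_exponent :: "word \<Rightarrow> int" where
  "y_exponent w = (\<Sum>l\<leftarrow>w. expy l)"

definition height_moment :: "int \<times> int \<Rightarrow> word \<Rightarrow> int" where
  "height_moment p w = (\<Sum>(_, q, s)\<leftarrow>filter fst (edges p w). s * snd q)"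

lemma x_exponent_append [simp]: "x_exponent (u @ v) = x_exponent u + x_exponent v"
  by (simp add: x_exponent_def)

lemma y_exponent_append [simp]: "y_exponent (u @ v) = y_exponent u + y_exponent v"
  by (simp add: y_exponent_def)

lemma edges_append:
  "edges (i, j) (u @ v) = edges (i, j) u @ edges (i + x_exponent u, j + y_exponent u) v"
  by (induction u arbitrary: i j rule: edges.induct)
    (simp_all add: x_exponent_def y_exponent_def algebra_simps)

lemma edges_translate:
  "edges (i + k, j + l) w =
    map (\<lambda>(b, (i', j'), s). (b, (i' + k, j' + l), s)) (edges (i, j) w)"
  by (induction "(i, j)" w arbitrary: i j rule: edges.induct) (simp_all add: algebra_simps)

lemma sum_list_x_edge_signs: "(\<Sum>(_, _, s)\<leftarrow>filter fst (edges p w). s) = x_exponent w"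
  by (induction p w rule: edges.induct) (simp_all add: x_exponent_def)

lemma height_moment_shift:
  "height_moment (i, j) w = height_moment (0, 0) w + j * x_exponent w"
proof -
  have "height_moment (i, j) w =
      (\<Sum>(_, q, s)\<leftarrow>filter fst (edges (0, 0) w). s * snd q + j * s)"
    using edges_translate[of 0 i 0 j w]
    by (simp add: height_moment_def filter_map comp_def split_def algebra_simps)
  also have "\<dots> = height_moment (0, 0) w + j * x_exponent w"
    by (simp add: height_moment_def sum_list_addf sum_list_const_mult split_def
        flip: sum_list_x_edge_signs[of "(0, 0)"])
  finally show ?thesis .
qed

lemma height_moment_append:
  "height_moment (0, 0) (u @ v) =
    height_moment (0, 0) u + height_moment (0, 0) v + y_exponent u * x_exponent v"
  using height_moment_shift[of "x_exponent u" "y_exponent u" v]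
  by (simp add: height_moment_def edges_append)

lemma height_moment_square:
  "height_moment (0, 0) (w @ w) = 2 * height_moment (0, 0) w + y_exponent w * x_exponent w"
  by (simp add: height_moment_append)

lemma coeffP_eq_sum_list:
  "coeffP w q =
    (\<Sum>e\<leftarrow>filter fst (edges (0, 0) w). if fst (snd e) = q then snd (snd e) else 0)"
proof -
  have "sum_list (concat (map (\<lambda>(b, q', s). if b \<and> q' = q then [s] else []) E))
      = (\<Sum>e\<leftarrow>filter fst E. if fst (snd e) = q then snd (snd e) else 0)"
    for E :: "(bool \<times> (int \<times> int) \<times> int) list"
    by (induction E) auto
  then show ?thesis
    by (simp add: coeffP_def)
qed

lemma finite_Xpts: "finite (Xpts w)"
proof -
  have "Xpts w \<subseteq> fst ` snd ` set (edges (0, 0) w)"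
    unfolding Xpts_def by force
  then show ?thesis
    by (rule finite_subset) simp
qed

lemma phi_eq_height_moment: "phi w = of_int (height_moment (0, 0) w)"
proof -
  let ?c = "\<lambda>q. of_int (coeffP w q) :: real"
  have "f_alpha w = (\<lambda>y. \<Sum>q\<in>Xpts w. ?c q * y powi snd q)"
    by (simp add: f_alpha_def P_eval_def fun_eq_iff)
  moreover have "((\<lambda>y. \<Sum>q\<in>Xpts w. ?c q * y powi snd q) has_real_derivative
      (\<Sum>q\<in>Xpts w. ?c q * of_int (snd q))) (at 1)"
    by (rule derivative_eq_intros refl | simp add: mult.commute)+
  ultimately have "phi w = (\<Sum>q\<in>Xpts w. ?c q * of_int (snd q))"
    unfolding phi_def by (simp add: DERIV_imp_deriv)
  also have "\<dots> = (\<Sum>q\<in>Xpts w. (\<Sum>e\<leftarrow>filter fst (edges (0, 0) w).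
      if fst (snd e) = q then of_int (snd (snd e)) else 0) * of_int (snd q))"
    by (simp add: coeffP_eq_sum_list comp_def if_distrib[of of_int]
        cong: if_cong flip: sum_list_of_int)
  also have "\<dots> = (\<Sum>e\<leftarrow>filter fst (edges (0, 0) w).
      of_int (snd (snd e)) * of_int (snd (fst (snd e))))"
    by (rule sum_list_regroup[OF finite_Xpts]) (auto simp: Xpts_def)
  also have "\<dots> = of_int (height_moment (0, 0) w)"
    by (simp add: height_moment_def split_def comp_def flip: sum_list_of_int)
  finally show ?thesis .
qed

theorem lemma2p3:
  fixes a b :: word
  assumes "in_commutator (a @ a @ b @ b)"
  shows "\<exists>k::int. phi (a @ a @ b @ b) = of_int (2 * k)"
proof -
  have "x_exponent b = - x_exponent a" "y_exponent b = - y_exponent a"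
    using assms by (simp_all add: in_commutator_def x_exponent_def y_exponent_def)
  then have "height_moment (0, 0) (a @ a @ b @ b) = 2 * (height_moment (0, 0) a
      + height_moment (0, 0) b + y_exponent a * x_exponent a + 2 * y_exponent a * x_exponent b)"
    using height_moment_append[of "a @ a" "b @ b"]
    by (simp add: height_moment_square algebra_simps)
  then show ?thesis
    by (metis phi_eq_height_moment)
qed

end
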